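(* Let $T$ be an arbitrary $(\mathcal{F}_t^X)$-stopping time. Then $\mathcal{F}_T^X = \mathcal{F}_{T \wedge T_{\mathrm{expl}}}^X = \sigma\big(\bigcup_{n \geq 1} \mathcal{F}_{T \wedge T_n}^X\big)$.
   Context: $E$ is a closed subset of $\mathbb{R}^d$ and $E_\Delta = E \cup \{\Delta\}$ its one-point compactification. $\Omega$ is the space of càdlàg functions $\omega: \mathbb{R}_+ \to E_\Delta$ such that $\omega(t-) = \Delta$ or $\omega(t) = \Delta$ implies $\omega(s) = \Delta$ for all $s \geq t$. $X_t(\omega) := \omega(t)$ is the coordinate process, $\mathcal{F}^X := \sigma(X_s: s \ge 0)$ and $\mathcal{F}_t^X := \sigma(X_s : 0 \le s \le t)$. Let $\|\cdot\|$ be the Euclidean norm on $\mathbb{R}^d$ with $\|\Delta\| := \infty$. Define the stopping times $T_\Delta := \inf\{t : X_t = \Delta\}$, $T'_n := \inf\{t : \|X_{t-}\| \geq n \text{ or } \|X_t\| \geq n\}$ ($n \ge 1$), $T_{\mathrm{expl}} := T_\Delta$ if $T'_n < T_\Delta$ for all $n$, and $T_{\mathrm{expl}} := \infty$ if $T'_n = T_\Delta$ for some $n$; and $T_n := T'_n$ if $T'_n < T_\Delta$, $T_n := \infty$ if $T'_n = T_\Delta$. *)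

theory Defs
  imports "HOL-Probability.Probability"
begin

text \<open>The one-point compactification E_Delta of a closed set E in R^d is modelled by the
  type 'a option: Some x (x in E) are the points of E and None is the cemetery Delta.\<close>

definition normD :: "'a::real_normed_vector option \<Rightarrow> ereal" where
  "normD x = (case x of None \<Rightarrow> \<infinity> | Some y \<Rightarrow> ereal (norm y))"

text \<open>Convergence in the one-point compactification (for E closed): to a point of E means
  eventually in E and converging there; to Delta means leaving every compact, i.e. norm to infinity.\<close>

definition convD :: "(real \<Rightarrow> 'a::real_normed_vector option) \<Rightarrow> 'a option \<Rightarrow> real filter \<Rightarrow> bool" where
  "convD f l F = (case l of
      None \<Rightarrow> ((\<lambda>t. normD (f t)) \<longlongrightarrow> \<infinity>) F
    | Some x \<Rightarrow> (eventually (\<lambda>t. f t \<noteq> None) F \<and> ((\<lambda>t. the (f t)) \<longlongrightarrow> x) F))"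

text \<open>Left limit omega(t-), with the convention omega(0-) = omega(0).\<close>

definition leftlim :: "(real \<Rightarrow> 'a::real_normed_vector option) \<Rightarrow> real \<Rightarrow> 'a option" where
  "leftlim \<omega> t = (if t \<le> 0 then \<omega> 0 else (THE l. convD \<omega> l (at_left t)))"

text \<open>Path space Omega. Paths are functions on the real line, extended constantly
  (by omega 0) to negative times, so they correspond one-to-one to paths on R_+.\<close>

definition paths :: "'a::real_normed_vector set \<Rightarrow> (real \<Rightarrow> 'a option) set" where
  "paths E = {\<omega>.
      (\<forall>t. \<omega> t \<in> insert None (Some ` E))
    \<and> (\<forall>t<0. \<omega> t = \<omega> 0)
    \<and> (\<forall>t\<ge>0. convD \<omega> (\<omega> t) (at_right t))
    \<and> (\<forall>t>0. \<exists>l. convD \<omega> l (at_left t))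
    \<and> (\<forall>t\<ge>0. (leftlim \<omega> t = None \<or> \<omega> t = None) \<longrightarrow> (\<forall>s\<ge>t. \<omega> s = None))}"

definition borelD :: "'a::euclidean_space set \<Rightarrow> 'a option measure" where
  "borelD E = sigma (insert None (Some ` E))
     (insert {None} {Some ` (B \<inter> E) | B. B \<in> sets borel})"

text \<open>Natural filtration F^X_t, indexed by t in [-inf, inf]; trivial for t < 0 and
  F^X_inf = F^X = sigma(X_s : s >= 0).\<close>

definition natF :: "'a::euclidean_space set \<Rightarrow> ereal \<Rightarrow> (real \<Rightarrow> 'a option) measure" where
  "natF E t = sigma (paths E)
     {{\<omega> \<in> paths E. \<omega> s \<in> A} | s A. 0 \<le> s \<and> ereal s \<le> t \<and> A \<in> sets (borelD E)}"

definition T_Delta :: "(real \<Rightarrow> 'a::real_normed_vector option) \<Rightarrow> ereal" where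
  "T_Delta \<omega> = Inf {ereal t | t. 0 \<le> t \<and> \<omega> t = None}"

definition T'_n :: "nat \<Rightarrow> (real \<Rightarrow> 'a::real_normed_vector option) \<Rightarrow> ereal" where
  "T'_n n \<omega> = Inf {ereal t | t. 0 \<le> t \<and>
      (normD (leftlim \<omega> t) \<ge> ereal (real n) \<or> normD (\<omega> t) \<ge> ereal (real n))}"

definition T_expl :: "(real \<Rightarrow> 'a::real_normed_vector option) \<Rightarrow> ereal" where
  "T_expl \<omega> = (if \<forall>n\<ge>1. T'_n n \<omega> < T_Delta \<omega> then T_Delta \<omega> else \<infinity>)"

definition T_n :: "nat \<Rightarrow> (real \<Rightarrow> 'a::real_normed_vector option) \<Rightarrow> ereal" where
  "T_n n \<omega> = (if T'_n n \<omega> < T_Delta \<omega> then T'_n n \<omega> else \<infinity>)"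

end

theory Submission
  imports Defs
begin

text \<open>
  Since T_n \<le> T_expl, the \<sigma>-algebras F_{T \<and> T_n} are contained in F_{T \<and> T_expl}, which
  is contained in F_T, so it suffices to show that every A in F_T lies in
  \<Sigma> = \<sigma>(\<Union>n F_{T \<and> T_n}). On {T < T_n} and on {T \<and> T_n = \<infinity>} the event A is already an
  event of F_{T \<and> T_n}. On the remaining event H every T \<and> T_n equals T'_n. A cadlag path
  is bounded on compact intervals before it is killed, so T'_n increases to T_Delta, and the
  path sits in Delta from T_Delta on. Hence on H the event {X_s \<in> B} is the union of the events
  {X_s \<in> B, s < T \<and> T_n} of F_{T \<and> T_n} with, if Delta \<in> B, the event {T \<and> T_n \<le> s for all n};
  so the trace of F^X on H lies in \<Sigma>.
\<close>

section \<open>Stopping times and their \<sigma>-algebras\<close>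

lemma sigma_sets_Int_mem:
  assumes M: "sigma_algebra \<Omega> M" and H: "H \<in> M"
    and gen: "\<And>G. G \<in> \<G> \<Longrightarrow> G \<inter> H \<in> M"
    and A: "A \<in> sigma_sets \<Omega> \<G>"
  shows "A \<inter> H \<in> M"
proof -
  interpret sigma_algebra \<Omega> M by (rule M)
  from A show ?thesis
  proof induct
    case (Basic G)
    then show ?case by (rule gen)
  next
    case Empty
    show ?case by (simp only: Int_empty_left empty_sets)
  next
    case (Compl a)
    have "(\<Omega> - a) \<inter> H = H - a \<inter> H"
      using sets_into_space[OF H] by blast
    then show ?case using Diff[OF H Compl(2)] by (simp only:)
  next
    case (Union a)
    have "(\<Union>i. a i \<inter> H) \<in> M"
      by (rule countable_nat_UN) (simp add: image_subset_iff Union(2))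
    moreover have "(\<Union>i. a i) \<inter> H = (\<Union>i. a i \<inter> H)" by blast
    ultimately show ?case by (simp only:)
  qed
qed

lemma stopping_time_ereal_nonnegI:
  fixes T :: "'a \<Rightarrow> ereal"
  assumes nonneg: "\<And>\<omega>. 0 \<le> T \<omega>"
    and le: "\<And>t. 0 \<le> t \<Longrightarrow> Measurable.pred (F (ereal t)) (\<lambda>\<omega>. T \<omega> \<le> ereal t)"
  shows "stopping_time F T"
proof
  fix t :: ereal
  show "Measurable.pred (F t) (\<lambda>\<omega>. T \<omega> \<le> t)"
  proof (cases "0 \<le> t")
    case True
    then consider r where "t = ereal r" "0 \<le> r" | "t = \<infinity>" by (cases t) auto
    then show ?thesis using le by cases simp_all
  next
    case False
    then have "\<not> T \<omega> \<le> t" for \<omega> using nonneg[of \<omega>] by (meson order_trans)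
    then show ?thesis by simp
  qed
qed

lemma stopping_time_SUP_countable:
  fixes T :: "'i \<Rightarrow> 'a \<Rightarrow> 't::{complete_linorder, linorder_topology, second_countable_topology}"
  assumes "countable I" and "\<And>i. i \<in> I \<Longrightarrow> stopping_time F (T i)"
  shows "stopping_time F (\<lambda>\<omega>. SUP i\<in>I. T i \<omega>)"
  using assms by (auto simp: stopping_time_def SUP_le_iff intro!: measurable_pred_countable)

lemma stopping_time_if_less_else_top:
  fixes S R :: "'a \<Rightarrow> 't::{linorder_topology, second_countable_topology, order_top}"
  assumes F: "filtration \<Omega> F" and S: "stopping_time F S" and R: "stopping_time F R"
  shows "stopping_time F (\<lambda>\<omega>. if S \<omega> < R \<omega> then S \<omega> else top)"
proof
  fix t
  show "Measurable.pred (F t) (\<lambda>\<omega>. (if S \<omega> < R \<omega> then S \<omega> else top) \<le> t)"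
  proof (cases "t = top")
    case False
    have "{\<omega>\<in>\<Omega>. S \<omega> < R \<omega>} \<in> sets (filtration.pre_sigma \<Omega> F S)"
      using filtration.stopping_time_less[OF F S R]
      by (simp add: pred_def filtration.space_pre_sigma[OF F])
    from filtration.sets_pre_sigmaD[OF F S this, of t]
    have "{\<omega>\<in>{\<omega>\<in>\<Omega>. S \<omega> < R \<omega>}. S \<omega> \<le> t} \<in> sets (F t)" .
    moreover have "{\<omega>\<in>{\<omega>\<in>\<Omega>. S \<omega> < R \<omega>}. S \<omega> \<le> t}
        = {\<omega>\<in>space (F t). (if S \<omega> < R \<omega> then S \<omega> else top) \<le> t}"
      using False by (auto simp: filtration.space_F[OF F] top_unique)
    ultimately show ?thesis by (simp add: pred_def)
  qed simp
qed

context filtration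
begin

lemma sets_pre_sigmaI_ge:
  assumes S: "stopping_time F S" and A: "A \<in> sets (F s)"
    and ge: "\<And>\<omega>. \<omega> \<in> A \<Longrightarrow> s \<le> S \<omega>"
  shows "A \<in> sets (pre_sigma S)"
proof (rule sets_pre_sigmaI[OF S])
  fix t
  show "{\<omega>\<in>A. S \<omega> \<le> t} \<in> sets (F t)"
  proof (cases "s \<le> t")
    case True
    have "A \<inter> {\<omega>\<in>space (F t). S \<omega> \<le> t} \<in> sets (F t)"
      using A sets_F_mono[OF True] stopping_timeD[OF S, of t] by (auto simp: pred_def)
    moreover have "A \<inter> {\<omega>\<in>space (F t). S \<omega> \<le> t} = {\<omega>\<in>A. S \<omega> \<le> t}"
      using sets.sets_into_space[OF A] by (auto simp: space_F)
    ultimately show ?thesis by simp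
  next
    case False
    then have "\<not> S \<omega> \<le> t" if "\<omega> \<in> A" for \<omega>
      using ge[OF that] by (meson order_trans)
    then have "{\<omega>\<in>A. S \<omega> \<le> t} = {}" by blast
    then show ?thesis by (metis sets.empty_sets)
  qed
qed

lemma sets_pre_sigma_Int_less_const:
  assumes S: "stopping_time F S" and A: "A \<in> sets (F s)"
  shows "{\<omega>\<in>A. s < S \<omega>} \<in> sets (pre_sigma S)"
proof (rule sets_pre_sigmaI_ge[OF S])
  have "A \<inter> {\<omega>\<in>\<Omega>. s < S \<omega>} \<in> sets (F s)"
    using A stopping_timeD2[OF S, of s] by (auto simp: pred_def space_F)
  also have "A \<inter> {\<omega>\<in>\<Omega>. s < S \<omega>} = {\<omega>\<in>A. s < S \<omega>}"
    using sets.sets_into_space[OF A] by (auto simp: space_F)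
  finally show "{\<omega>\<in>A. s < S \<omega>} \<in> sets (F s)" .
qed auto

lemma sets_pre_sigma_Int_eq_const:
  assumes S: "stopping_time F S" and A: "A \<in> sets (F s)"
  shows "{\<omega>\<in>A. S \<omega> = s} \<in> sets (pre_sigma S)"
proof (rule sets_pre_sigmaI_ge[OF S])
  have "A \<inter> {\<omega>\<in>\<Omega>. S \<omega> = s} \<in> sets (F s)"
    using A stopping_time_eq_const[OF S, of s] by (auto simp: pred_def space_F)
  also have "A \<inter> {\<omega>\<in>\<Omega>. S \<omega> = s} = {\<omega>\<in>A. S \<omega> = s}"
    using sets.sets_into_space[OF A] by (auto simp: space_F)
  finally show "{\<omega>\<in>A. S \<omega> = s} \<in> sets (F s)" .
qed auto

lemma sets_pre_sigma_min_less:
  assumes T: "stopping_time F T" and S: "stopping_time F S" and A: "A \<in> sets (pre_sigma T)"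
  shows "{\<omega>\<in>A. T \<omega> < S \<omega>} \<in> sets (pre_sigma (\<lambda>\<omega>. min (T \<omega>) (S \<omega>)))"
proof (rule sets_pre_sigmaI[OF stopping_time_min[OF T S]])
  fix t
  have "A \<inter> {\<omega>\<in>\<Omega>. T \<omega> < S \<omega>} \<in> sets (pre_sigma T)"
    using A stopping_time_less[OF T S] by (auto simp: pred_def space_pre_sigma)
  also have "A \<inter> {\<omega>\<in>\<Omega>. T \<omega> < S \<omega>} = {\<omega>\<in>A. T \<omega> < S \<omega>}"
    using sets.sets_into_space[OF A] by (auto simp: space_pre_sigma)
  finally have "{\<omega>\<in>{\<omega>\<in>A. T \<omega> < S \<omega>}. T \<omega> \<le> t} \<in> sets (F t)"
    by (rule sets_pre_sigmaD[OF T])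
  also have "{\<omega>\<in>{\<omega>\<in>A. T \<omega> < S \<omega>}. T \<omega> \<le> t}
      = {\<omega>\<in>{\<omega>\<in>A. T \<omega> < S \<omega>}. min (T \<omega>) (S \<omega>) \<le> t}"
    by auto
  finally show "{\<omega>\<in>{\<omega>\<in>A. T \<omega> < S \<omega>}. min (T \<omega>) (S \<omega>) \<le> t} \<in> sets (F t)" .
qed

lemma sigma_algebra_sigma_pre_sigma:
  "sigma_algebra \<Omega> (sigma_sets \<Omega> (\<Union>i\<in>I. sets (pre_sigma (S i))))"
proof (rule sigma_algebra_sigma_sets)
  have "sets (pre_sigma (S i)) \<subseteq> Pow \<Omega>" for i
    using sets.space_closed[of "pre_sigma (S i)"] by (simp add: space_pre_sigma)
  then show "(\<Union>i\<in>I. sets (pre_sigma (S i))) \<subseteq> Pow \<Omega>" by blast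
qed

end

section \<open>Cadlag paths\<close>

lemma normD_nonneg: "0 \<le> normD x"
  by (auto simp: normD_def split: option.splits)

lemma convD_tendsto_normD:
  assumes "convD \<omega> l F"
  shows "((\<lambda>t. normD (\<omega> t)) \<longlongrightarrow> normD l) F"
proof (cases l)
  case None
  then show ?thesis using assms by (simp add: convD_def normD_def)
next
  case (Some x)
  with assms have ev: "eventually (\<lambda>t. \<omega> t \<noteq> None) F" and lim: "((\<lambda>t. the (\<omega> t)) \<longlongrightarrow> x) F"
    by (auto simp: convD_def)
  have "((\<lambda>t. ereal (norm (the (\<omega> t)))) \<longlongrightarrow> ereal (norm x)) F"
    by (intro tendsto_intros lim)
  moreover have "eventually (\<lambda>t. ereal (norm (the (\<omega> t))) = normD (\<omega> t)) F"
    using ev by eventually_elim (auto simp: normD_def)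
  ultimately have "((\<lambda>t. normD (\<omega> t)) \<longlongrightarrow> ereal (norm x)) F"
    by (rule Lim_transform_eventually)
  then show ?thesis using Some by (simp add: normD_def)
qed

lemma convD_unique:
  assumes "convD \<omega> l1 F" "convD \<omega> l2 F" "F \<noteq> bot"
  shows "l1 = l2"
proof -
  have n: "normD l1 = normD l2"
    using tendsto_unique[OF assms(3) convD_tendsto_normD[OF assms(1)] convD_tendsto_normD[OF assms(2)]] .
  show ?thesis
  proof (cases l1)
    case None
    then show ?thesis using n by (cases l2) (auto simp: normD_def)
  next
    case (Some x)
    then obtain y where y: "l2 = Some y" using n by (cases l2) (auto simp: normD_def)
    have "x = y"
      using tendsto_unique[OF assms(3)] assms(1,2) Some y by (auto simp: convD_def)
    then show ?thesis using Some y by simp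
  qed
qed

lemma paths_range: "\<omega> \<in> paths E \<Longrightarrow> \<omega> u \<in> insert None (Some ` E)"
  by (auto simp: paths_def)

lemma paths_convD_right: "\<omega> \<in> paths E \<Longrightarrow> 0 \<le> t \<Longrightarrow> convD \<omega> (\<omega> t) (at_right t)"
  by (auto simp: paths_def)

lemma paths_convD_leftlim:
  assumes "\<omega> \<in> paths E" "0 < t"
  shows "convD \<omega> (leftlim \<omega> t) (at_left t)"
proof -
  obtain l where l: "convD \<omega> l (at_left t)" using assms by (auto simp: paths_def)
  have "(THE l. convD \<omega> l (at_left t)) = l"
    using convD_unique[OF _ l] by (intro the_equality l) simp
  then show ?thesis using l assms by (simp add: leftlim_def)
qed

lemma paths_None_after:
  "\<omega> \<in> paths E \<Longrightarrow> 0 \<le> u \<Longrightarrow> leftlim \<omega> u = None \<or> \<omega> u = None \<Longrightarrow> u \<le> s \<Longrightarrow> \<omega> s = None"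
  unfolding paths_def by blast

definition peak :: "(real \<Rightarrow> 'a::real_normed_vector option) \<Rightarrow> real \<Rightarrow> ereal" where
  "peak \<omega> u = max (normD (leftlim \<omega> u)) (normD (\<omega> u))"

lemma peak_nonneg: "0 \<le> peak \<omega> u"
  by (simp add: peak_def normD_nonneg le_max_iff_disj)

lemma paths_normD_locally_bounded:
  assumes p: "\<omega> \<in> paths E" and u: "0 \<le> u" and c: "peak \<omega> u < c"
  obtains \<delta> where "\<delta> > 0" "\<And>q. 0 \<le> q \<Longrightarrow> \<bar>q - u\<bar> < \<delta> \<Longrightarrow> normD (\<omega> q) \<le> c"
proof -
  obtain \<delta>1 where d1: "\<delta>1 > 0" "\<And>q. u < q \<Longrightarrow> q < u + \<delta>1 \<Longrightarrow> normD (\<omega> q) < c"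
  proof -
    have "eventually (\<lambda>q. normD (\<omega> q) < c) (at_right u)"
      using order_tendstoD(2)[OF convD_tendsto_normD[OF paths_convD_right[OF p u]]] c
      by (simp add: peak_def)
    then show ?thesis
      unfolding eventually_at_right_field by (metis that add.commute diff_add_cancel diff_gt_0_iff_gt)
  qed
  obtain \<delta>2 where d2: "\<delta>2 > 0" "\<And>q. 0 \<le> q \<Longrightarrow> u - \<delta>2 < q \<Longrightarrow> q < u \<Longrightarrow> normD (\<omega> q) < c"
  proof (cases "u = 0")
    case True
    show ?thesis by (rule that[of 1]) (use True in auto)
  next
    case False
    with u have "0 < u" by simp
    have "eventually (\<lambda>q. normD (\<omega> q) < c) (at_left u)"
      using order_tendstoD(2)[OF convD_tendsto_normD[OF paths_convD_leftlim[OF p \<open>0 < u\<close>]]] c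
      by (simp add: peak_def)
    then obtain a where "a < u" "\<And>q. a < q \<Longrightarrow> q < u \<Longrightarrow> normD (\<omega> q) < c"
      unfolding eventually_at_left_field by blast
    then show ?thesis by (intro that[of "u - a"]) auto
  qed
  show ?thesis
  proof (rule that[of "min \<delta>1 \<delta>2"])
    fix q assume q: "0 \<le> q" "\<bar>q - u\<bar> < min \<delta>1 \<delta>2"
    consider "q = u" | "u < q" | "q < u" by linarith
    then show "normD (\<omega> q) \<le> c"
      by cases (use c d1(2)[of q] d2(2)[of q] q in \<open>auto simp: peak_def intro: less_imp_le\<close>)
  qed (use d1 d2 in simp)
qed

lemma paths_leftlim_normD_le:
  assumes p: "\<omega> \<in> paths E" and q: "0 \<le> q" and a: "a < q"
    and le: "\<And>r. 0 \<le> r \<Longrightarrow> a < r \<Longrightarrow> r \<le> q \<Longrightarrow> normD (\<omega> r) \<le> c"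
  shows "normD (leftlim \<omega> q) \<le> c"
proof (cases "q = 0")
  case True
  then show ?thesis using le[of 0] a by (simp add: leftlim_def)
next
  case False
  with q have "0 < q" by simp
  have "eventually (\<lambda>r. r \<in> {max 0 a<..<q}) (at_left q)"
    using a \<open>0 < q\<close> by (intro eventually_at_left_real) auto
  then have "eventually (\<lambda>r. normD (\<omega> r) \<le> c) (at_left q)"
    by eventually_elim (auto intro!: le)
  then show ?thesis
    using tendsto_upperbound[OF convD_tendsto_normD[OF paths_convD_leftlim[OF p \<open>0 < q\<close>]]]
    by simp
qed

lemma paths_peak_locally_bounded:
  assumes p: "\<omega> \<in> paths E" and u: "0 \<le> u" and b: "peak \<omega> u < b"
  obtains \<delta> c where "\<delta> > 0" "c < b" "\<And>q. 0 \<le> q \<Longrightarrow> \<bar>q - u\<bar> < \<delta> \<Longrightarrow> peak \<omega> q \<le> c"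
proof -
  obtain c where c: "peak \<omega> u < c" "c < b" using dense[OF b] by blast
  obtain \<delta> where \<delta>: "\<delta> > 0" "\<And>q. 0 \<le> q \<Longrightarrow> \<bar>q - u\<bar> < \<delta> \<Longrightarrow> normD (\<omega> q) \<le> c"
    using paths_normD_locally_bounded[OF p u c(1)] by blast
  have "peak \<omega> q \<le> c" if q: "0 \<le> q" "\<bar>q - u\<bar> < \<delta>" for q
  proof -
    have "normD (leftlim \<omega> q) \<le> c"
      using q by (intro paths_leftlim_normD_le[OF p q(1), of "u - \<delta>"] \<delta>(2)) auto
    then show ?thesis using \<delta>(2)[OF q] by (simp add: peak_def)
  qed
  with \<delta>(1) c(2) show ?thesis by (rule that)
qed

lemma paths_peak_bounded_on_Icc:
  assumes p: "\<omega> \<in> paths E" and s: "0 \<le> s" and b: "\<And>u. u \<in> {0..s} \<Longrightarrow> peak \<omega> u < b"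
  obtains c where "c < b" "\<And>q. q \<in> {0..s} \<Longrightarrow> peak \<omega> q \<le> c"
proof -
  have "\<exists>\<delta> c. \<delta> > 0 \<and> c < b \<and> (\<forall>q. 0 \<le> q \<and> \<bar>q - u\<bar> < \<delta> \<longrightarrow> peak \<omega> q \<le> c)" if "u \<in> {0..s}" for u
    using paths_peak_locally_bounded[OF p _ b[OF that]] that by (metis atLeastAtMost_iff)
  then obtain \<delta> c where dc: "\<And>u. u \<in> {0..s} \<Longrightarrow>
      \<delta> u > 0 \<and> c u < b \<and> (\<forall>q. 0 \<le> q \<and> \<bar>q - u\<bar> < \<delta> u \<longrightarrow> peak \<omega> q \<le> c u)"
    by metis
  have cover: "{0..s} \<subseteq> (\<Union>u\<in>{0..s}. ball u (\<delta> u))"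
    using dc by force
  obtain K where K: "K \<subseteq> {0..s}" "finite K" "{0..s} \<subseteq> (\<Union>u\<in>K. ball u (\<delta> u))"
    by (rule compactE_image[OF compact_Icc _ cover]) auto
  have "K \<noteq> {}" using K(3) s by auto
  show ?thesis
  proof
    show "Max (c ` K) < b"
      using K dc \<open>K \<noteq> {}\<close> by (subst Max_less_iff) auto
    fix q assume q: "q \<in> {0..s}"
    then obtain u where u: "u \<in> K" "q \<in> ball u (\<delta> u)" using K(3) by blast
    then have "peak \<omega> q \<le> c u"
      using dc[of u] K(1) q by (auto simp: dist_real_def abs_minus_commute)
    also have "c u \<le> Max (c ` K)" using K u by auto
    finally show "peak \<omega> q \<le> Max (c ` K)" .
  qed
qed

section \<open>The explosion times\<close>

lemma T_Delta_nonneg: "0 \<le> T_Delta \<omega>"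
  unfolding T_Delta_def by (auto intro!: Inf_greatest)

lemma T'_n_nonneg: "0 \<le> T'_n n \<omega>"
  unfolding T'_n_def by (auto intro!: Inf_greatest)

lemma T'_n_eq_Inf_peak: "T'_n n \<omega> = Inf {ereal t | t. 0 \<le> t \<and> ereal (real n) \<le> peak \<omega> t}"
  by (simp add: T'_n_def peak_def le_max_iff_disj)

lemma T'_n_le_T_Delta: "T'_n n \<omega> \<le> T_Delta \<omega>"
  unfolding T'_n_def T_Delta_def by (rule Inf_superset_mono) (auto simp: normD_def)

lemma T_Delta_le_iff:
  assumes p: "\<omega> \<in> paths E" and t: "0 \<le> t"
  shows "T_Delta \<omega> \<le> ereal t \<longleftrightarrow> \<omega> t = None"
proof
  assume "\<omega> t = None"
  with t have "ereal t \<in> {ereal t | t. 0 \<le> t \<and> \<omega> t = None}" by blast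
  then show "T_Delta \<omega> \<le> ereal t" unfolding T_Delta_def by (rule Inf_lower)
next
  assume le: "T_Delta \<omega> \<le> ereal t"
  show "\<omega> t = None"
  proof (rule ccontr)
    assume alive: "\<omega> t \<noteq> None"
    then obtain x where "\<omega> t = Some x" by (cases "\<omega> t") auto
    then have "eventually (\<lambda>q. \<omega> q \<noteq> None) (at_right t)"
      using paths_convD_right[OF p t] by (simp add: convD_def)
    then obtain b where b: "t < b" "\<And>q. t < q \<Longrightarrow> q < b \<Longrightarrow> \<omega> q \<noteq> None"
      unfolding eventually_at_right_field by blast
    have "ereal b \<le> T_Delta \<omega>"
      unfolding T_Delta_def
    proof (rule Inf_greatest, clarify)
      fix q assume q: "0 \<le> q" "\<omega> q = None"
      have "\<not> q \<le> t" using paths_None_after[OF p q(1), of t] q(2) alive by auto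
      then have "b \<le> q" using b(2)[of q] q(2) by (meson not_le)
      then show "ereal b \<le> ereal q" by simp
    qed
    with le have "ereal b \<le> ereal t" by (rule order_trans[rotated])
    with b(1) show False by simp
  qed
qed

lemma T'_n_le_iff:
  assumes p: "\<omega> \<in> paths E" and t: "0 \<le> t"
  shows "T'_n n \<omega> \<le> ereal t \<longleftrightarrow> (\<exists>u\<in>{0..t}. ereal (real n) \<le> peak \<omega> u)"
proof
  assume "\<exists>u\<in>{0..t}. ereal (real n) \<le> peak \<omega> u"
  then obtain u where u: "0 \<le> u" "u \<le> t" "ereal (real n) \<le> peak \<omega> u" by auto
  then have "T'_n n \<omega> \<le> ereal u" unfolding T'_n_eq_Inf_peak by (auto intro!: Inf_lower)
  with u(2) show "T'_n n \<omega> \<le> ereal t" by (simp add: order_trans)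
next
  assume le: "T'_n n \<omega> \<le> ereal t"
  show "\<exists>u\<in>{0..t}. ereal (real n) \<le> peak \<omega> u"
  proof (rule ccontr)
    assume "\<not> ?thesis"
    then have below: "\<And>u. 0 \<le> u \<Longrightarrow> u \<le> t \<Longrightarrow> peak \<omega> u < ereal (real n)"
      by (auto simp: not_le)
    obtain \<delta> c where d: "\<delta> > 0" "c < ereal (real n)"
      "\<And>q. 0 \<le> q \<Longrightarrow> \<bar>q - t\<bar> < \<delta> \<Longrightarrow> peak \<omega> q \<le> c"
      using paths_peak_locally_bounded[OF p t below[OF t order_refl]] by blast
    have "ereal (t + \<delta>) \<le> T'_n n \<omega>"
      unfolding T'_n_eq_Inf_peak
    proof (rule Inf_greatest, clarify)
      fix q assume q: "0 \<le> q" "ereal (real n) \<le> peak \<omega> q"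
      have "\<not> q \<le> t" using below[OF q(1)] q(2) by (meson leD)
      moreover have "\<not> \<bar>q - t\<bar> < \<delta>"
      proof
        assume "\<bar>q - t\<bar> < \<delta>"
        with q(2) d(3)[OF q(1)] have "ereal (real n) \<le> c" by (meson order_trans)
        with d(2) show False by simp
      qed
      ultimately show "ereal (t + \<delta>) \<le> ereal q" by auto
    qed
    with le have "ereal (t + \<delta>) \<le> ereal t" by (rule order_trans[rotated])
    with d(1) show False by simp
  qed
qed

lemma less_peak_imp_rational_witness:
  assumes p: "\<omega> \<in> paths E" and u: "u \<in> {0..t}" and c: "ereal c < peak \<omega> u"
  shows "\<exists>q\<in>insert t (\<rat> \<inter> {0..t}). ereal c < normD (\<omega> q)"
proof -
  consider "ereal c < normD (\<omega> u)" | "ereal c < normD (leftlim \<omega> u)" "0 < u"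
    using u c by (cases "u = 0") (auto simp: peak_def leftlim_def less_max_iff_disj)
  then show ?thesis
  proof cases
    case 1
    show ?thesis
    proof (cases "u = t")
      case False
      with u have "0 \<le> u" "u < t" by auto
      have "eventually (\<lambda>q. ereal c < normD (\<omega> q)) (at_right u)"
        using order_tendstoD(1)[OF convD_tendsto_normD[OF paths_convD_right[OF p \<open>0 \<le> u\<close>]] 1] .
      then obtain a where a: "u < a" "\<And>q. u < q \<Longrightarrow> q < a \<Longrightarrow> ereal c < normD (\<omega> q)"
        unfolding eventually_at_right_field by blast
      obtain r where "r \<in> \<rat>" "u < r" "r < min a t"
        using Rats_dense_in_real[of u "min a t"] a(1) \<open>u < t\<close> by auto
      then show ?thesis using a(2)[of r] \<open>0 \<le> u\<close> by auto
    qed (use 1 in blast)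
  next
    case 2
    have "eventually (\<lambda>q. ereal c < normD (\<omega> q)) (at_left u)"
      using order_tendstoD(1)[OF convD_tendsto_normD[OF paths_convD_leftlim[OF p 2(2)]] 2(1)] .
    then obtain a where a: "a < u" "\<And>q. a < q \<Longrightarrow> q < u \<Longrightarrow> ereal c < normD (\<omega> q)"
      unfolding eventually_at_left_field by blast
    obtain r where "r \<in> \<rat>" "max a 0 < r" "r < u"
      using Rats_dense_in_real[of "max a 0" u] a(1) 2(2) by auto
    then show ?thesis using a(2)[of r] u by auto
  qed
qed

lemma exists_peak_ge_iff_rational:
  assumes p: "\<omega> \<in> paths E" and t: "0 \<le> t"
  shows "(\<exists>u\<in>{0..t}. ereal b \<le> peak \<omega> u) \<longleftrightarrow>
    (\<forall>c\<in>\<rat>. c < b \<longrightarrow> (\<exists>q\<in>insert t (\<rat> \<inter> {0..t}). ereal c < normD (\<omega> q)))"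
proof
  assume "\<exists>u\<in>{0..t}. ereal b \<le> peak \<omega> u"
  then obtain u where u: "u \<in> {0..t}" "ereal b \<le> peak \<omega> u" by blast
  show "\<forall>c\<in>\<rat>. c < b \<longrightarrow> (\<exists>q\<in>insert t (\<rat> \<inter> {0..t}). ereal c < normD (\<omega> q))"
  proof (intro ballI impI)
    fix c :: real assume "c < b"
    then have "ereal c < ereal b" by simp
    from this u(2) have "ereal c < peak \<omega> u" by (rule order_less_le_trans)
    then show "\<exists>q\<in>insert t (\<rat> \<inter> {0..t}). ereal c < normD (\<omega> q)"
      by (rule less_peak_imp_rational_witness[OF p u(1)])
  qed
next
  assume rat: "\<forall>c\<in>\<rat>. c < b \<longrightarrow> (\<exists>q\<in>insert t (\<rat> \<inter> {0..t}). ereal c < normD (\<omega> q))"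
  show "\<exists>u\<in>{0..t}. ereal b \<le> peak \<omega> u"
  proof (rule ccontr)
    assume "\<not> ?thesis"
    then have "\<And>u. u \<in> {0..t} \<Longrightarrow> peak \<omega> u < ereal b" by (auto simp: not_le)
    then obtain d where d: "d < ereal b" "\<And>q. q \<in> {0..t} \<Longrightarrow> peak \<omega> q \<le> d"
      using paths_peak_bounded_on_Icc[OF p t] by blast
    have "0 \<le> d" using d(2)[of 0] t peak_nonneg[of \<omega> 0] by auto
    with d(1) obtain d' where d': "d = ereal d'" by (cases d) auto
    obtain c where c: "c \<in> \<rat>" "d' < c" "c < b"
      using Rats_dense_in_real[of d' b] d(1) d' by auto
    then obtain q where q: "q \<in> insert t (\<rat> \<inter> {0..t})" "ereal c < normD (\<omega> q)"
      using rat by blast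
    then have "q \<in> {0..t}" using t by auto
    have "normD (\<omega> q) \<le> d" using d(2)[OF \<open>q \<in> {0..t}\<close>] by (simp add: peak_def)
    with q(2) have "ereal c < d" by (rule order_less_le_trans)
    with d' c(2) show False by simp
  qed
qed

lemma paths_peak_finite_before_T_Delta:
  assumes p: "\<omega> \<in> paths E" and u: "0 \<le> u" and lt: "ereal u < T_Delta \<omega>"
  shows "peak \<omega> u < \<infinity>"
proof -
  have "\<omega> u \<noteq> None" using T_Delta_le_iff[OF p u] lt by auto
  moreover have "leftlim \<omega> u \<noteq> None"
    using paths_None_after[OF p u _ order_refl] \<open>\<omega> u \<noteq> None\<close> by auto
  ultimately show ?thesis by (auto simp: peak_def normD_def max_def)
qed

lemma less_T_Delta_imp_less_T'_n:
  assumes p: "\<omega> \<in> paths E" and lt: "ereal s < T_Delta \<omega>"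
  obtains n where "1 \<le> n" "ereal s < T'_n n \<omega>"
proof (cases "0 \<le> s")
  case False
  then have "ereal s < 0" by simp
  then have "ereal s < T'_n 1 \<omega>" using T'_n_nonneg[of 1 \<omega>] by (rule order_less_le_trans)
  then show ?thesis by (rule that[OF order_refl])
next
  case True
  obtain s' where s': "s < s'" "ereal s' < T_Delta \<omega>"
    using lt by (metis ereal_dense2 less_ereal.simps(1))
  have finite: "peak \<omega> u < \<infinity>" if u: "u \<in> {0..s'}" for u
  proof -
    have "ereal u \<le> ereal s'" using u by simp
    then have "ereal u < T_Delta \<omega>" using s'(2) by (rule order_le_less_trans)
    with u show ?thesis by (intro paths_peak_finite_before_T_Delta[OF p]) auto
  qed
  obtain c where c: "c < \<infinity>" "\<And>q. q \<in> {0..s'} \<Longrightarrow> peak \<omega> q \<le> c"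
    using paths_peak_bounded_on_Icc[OF p _ finite] True s'(1) by (metis less_eq_real_def order_trans)
  obtain n :: nat where n: "1 \<le> n" "c < ereal (real n)"
  proof -
    obtain m :: nat where "c < ereal (real m)" using c(1) less_PInf_Ex_of_nat by auto
    then show ?thesis by (intro that[of "m + 1"]) (auto simp: order_less_le_trans)
  qed
  have "ereal s' \<le> T'_n n \<omega>"
    unfolding T'_n_eq_Inf_peak
  proof (rule Inf_greatest, clarify)
    fix q assume q: "0 \<le> q" "ereal (real n) \<le> peak \<omega> q"
    show "ereal s' \<le> ereal q"
    proof (rule ccontr)
      assume "\<not> ereal s' \<le> ereal q"
      then have "peak \<omega> q \<le> c" using c(2) q(1) by simp
      with q(2) n(2) show False by simp
    qed
  qed
  moreover have "ereal s < ereal s'" using s'(1) by simp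
  ultimately have "ereal s < T'_n n \<omega>" by (metis order_less_le_trans)
  with n(1) show ?thesis by (rule that)
qed

lemma T_Delta_eq_SUP_T'_n:
  assumes p: "\<omega> \<in> paths E"
  shows "T_Delta \<omega> = (SUP n\<in>{1..}. T'_n n \<omega>)"
proof (rule antisym)
  show "T_Delta \<omega> \<le> (SUP n\<in>{1..}. T'_n n \<omega>)"
  proof (rule dense_le)
    fix x assume x: "x < T_Delta \<omega>"
    show "x \<le> (SUP n\<in>{1..}. T'_n n \<omega>)"
    proof (cases x)
      case (real s)
      with x obtain n where "1 \<le> n" "x < T'_n n \<omega>"
        using less_T_Delta_imp_less_T'_n[OF p] by metis
      then show ?thesis by (auto intro: SUP_upper2 less_imp_le)
    qed (use x in auto)
  qed
qed (rule SUP_least, rule T'_n_le_T_Delta)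

lemma paths_None_iff_T'_n_le:
  assumes p: "\<omega> \<in> paths E" and s: "0 \<le> s"
  shows "\<omega> s = None \<longleftrightarrow> (\<forall>n\<in>{1..}. \<not> ereal s < T'_n n \<omega>)"
proof -
  have "\<omega> s = None \<longleftrightarrow> \<not> ereal s < T_Delta \<omega>"
    using T_Delta_le_iff[OF p s] by (simp add: not_less)
  also have "\<dots> \<longleftrightarrow> (\<forall>n\<in>{1..}. \<not> ereal s < T'_n n \<omega>)"
    by (simp add: T_Delta_eq_SUP_T'_n[OF p] less_SUP_iff)
  finally show ?thesis .
qed

lemma T_expl_eq_SUP_T_n:
  assumes p: "\<omega> \<in> paths E"
  shows "T_expl \<omega> = (SUP n\<in>{1..}. T_n n \<omega>)"
proof (cases "\<forall>n\<ge>1. T'_n n \<omega> < T_Delta \<omega>")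
  case True
  then have "(SUP n\<in>{1..}. T_n n \<omega>) = (SUP n\<in>{1..}. T'_n n \<omega>)"
    by (intro SUP_cong) (auto simp: T_n_def)
  then show ?thesis
    using True T_Delta_eq_SUP_T'_n[OF p] by (simp add: T_expl_def)
next
  case False
  then obtain n where "n \<in> {1..}" "T_n n \<omega> = \<infinity>" by (auto simp: T_n_def)
  then have "(SUP n\<in>{1..}. T_n n \<omega>) = \<infinity>"
    by (metis SUP_upper top_ereal_def top_unique)
  moreover have "T_expl \<omega> = \<infinity>" unfolding T_expl_def using False by (rule if_not_P)
  ultimately show ?thesis by simp
qed

section \<open>The natural filtration\<close>

lemma space_natF [simp]: "space (natF E t) = paths E"
  unfolding natF_def by (rule space_measure_of) auto

lemma sets_natF: "sets (natF E t) = sigma_sets (paths E)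
    {{\<omega> \<in> paths E. \<omega> s \<in> A} | s A. 0 \<le> s \<and> ereal s \<le> t \<and> A \<in> sets (borelD E)}"
  unfolding natF_def by (rule sets_measure_of) auto

lemma filtration_natF: "filtration (paths E) (natF E)"
proof
  show "sets (natF E s) \<subseteq> sets (natF E t)" if "s \<le> t" for s t
    unfolding sets_natF using that by (intro sigma_sets_mono') (auto intro: order_trans)
qed simp

interpretation natF: filtration "paths E" "natF E" for E :: "'a::euclidean_space set"
  by (rule filtration_natF)

lemma pred_natF_mem:
  "0 \<le> s \<Longrightarrow> ereal s \<le> t \<Longrightarrow> A \<in> sets (borelD E) \<Longrightarrow> Measurable.pred (natF E t) (\<lambda>\<omega>. \<omega> s \<in> A)"
  unfolding pred_def sets_natF by (auto intro: sigma_sets.Basic)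

lemma sets_borelD: "sets (borelD E) = sigma_sets (insert None (Some ` E))
    (insert {None} {Some ` (B \<inter> E) | B. B \<in> sets borel})"
  unfolding borelD_def by (rule sets_measure_of) auto

lemma None_in_borelD: "{None} \<in> sets (borelD E)"
  unfolding sets_borelD by (rule sigma_sets.Basic) simp

lemma normD_greater_in_borelD: "{x \<in> insert None (Some ` E). ereal c < normD x} \<in> sets (borelD E)"
proof -
  have "{y. c < norm y} \<in> sets borel"
    by (intro borel_open open_Collect_less continuous_intros)
  then have "Some ` ({y. c < norm y} \<inter> E) \<in> sets (borelD E)"
    unfolding sets_borelD by (intro sigma_sets.Basic) blast
  with None_in_borelD have "{None} \<union> Some ` ({y. c < norm y} \<inter> E) \<in> sets (borelD E)"
    by (rule sets.Un)
  also have "{None} \<union> Some ` ({y. c < norm y} \<inter> E) = {x \<in> insert None (Some ` E). ereal c < normD x}"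
    by (auto simp: normD_def)
  finally show ?thesis .
qed

lemma stopping_time_T_Delta: "stopping_time (natF E) T_Delta"
proof (rule stopping_time_ereal_nonnegI[OF T_Delta_nonneg])
  fix t :: real assume t: "0 \<le> t"
  show "Measurable.pred (natF E (ereal t)) (\<lambda>\<omega>. T_Delta \<omega> \<le> ereal t)"
  proof (rule measurable_cong[THEN iffD2])
    show "T_Delta \<omega> \<le> ereal t \<longleftrightarrow> \<omega> t \<in> {None}" if "\<omega> \<in> space (natF E (ereal t))" for \<omega>
      using T_Delta_le_iff[of \<omega> E t] that t by simp
    show "Measurable.pred (natF E (ereal t)) (\<lambda>\<omega>. \<omega> t \<in> {None})"
      using t by (intro pred_natF_mem None_in_borelD) auto
  qed
qed

lemma stopping_time_T'_n: "stopping_time (natF E) (T'_n n)"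
proof (rule stopping_time_ereal_nonnegI[OF T'_n_nonneg])
  fix t :: real assume t: "0 \<le> t"
  let ?D = "insert t (\<rat> \<inter> {0..t})"
  let ?above = "\<lambda>c. {x \<in> insert None (Some ` E). ereal c < normD x}"
  show "Measurable.pred (natF E (ereal t)) (\<lambda>\<omega>. T'_n n \<omega> \<le> ereal t)"
  proof (rule measurable_cong[THEN iffD2])
    show "T'_n n \<omega> \<le> ereal t \<longleftrightarrow> (\<forall>c\<in>{c\<in>\<rat>. c < real n}. \<exists>q\<in>?D. \<omega> q \<in> ?above c)"
      if "\<omega> \<in> space (natF E (ereal t))" for \<omega>
    proof -
      have p: "\<omega> \<in> paths E" using that by simp
      then have "\<omega> q \<in> ?above c \<longleftrightarrow> ereal c < normD (\<omega> q)" for q c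
        using paths_range[OF p] by auto
      then show ?thesis
        unfolding T'_n_le_iff[OF p t] exists_peak_ge_iff_rational[OF p t] by auto
    qed
    show "Measurable.pred (natF E (ereal t)) (\<lambda>\<omega>. \<forall>c\<in>{c\<in>\<rat>. c < real n}. \<exists>q\<in>?D. \<omega> q \<in> ?above c)"
      using t by (intro measurable_pred_countable countable_Collect countable_insert countable_Int1
          countable_rat pred_natF_mem normD_greater_in_borelD) auto
  qed
qed

lemma stopping_time_T_n: "stopping_time (natF E) (T_n n)"
proof -
  have eq: "T_n n = (\<lambda>\<omega>. if T'_n n \<omega> < T_Delta \<omega> then T'_n n \<omega> else top)"
    by (simp add: fun_eq_iff T_n_def top_ereal_def)
  show ?thesis
    unfolding eq
    by (rule stopping_time_if_less_else_top[OF filtration_natF stopping_time_T'_n stopping_time_T_Delta])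
qed

lemma stopping_time_T_expl: "stopping_time (natF E) T_expl"
proof -
  have "stopping_time (natF E) (\<lambda>\<omega>. SUP n\<in>{1..}. T_n n \<omega>)"
    by (intro stopping_time_SUP_countable stopping_time_T_n) auto
  then show ?thesis
    by (subst stopping_time_cong[where S="\<lambda>\<omega>. SUP n\<in>{1..}. T_n n \<omega>"])
      (simp_all add: T_expl_eq_SUP_T_n)
qed

section \<open>Decomposing F_T along the times T \<and> T_n\<close>

context
  fixes E :: "'a::euclidean_space set" and S :: "nat \<Rightarrow> (real \<Rightarrow> 'a option) \<Rightarrow> ereal"
    and H :: "(real \<Rightarrow> 'a option) set"
  assumes S: "\<And>n. stopping_time (natF E) (S n)"
    and H: "H \<in> sigma_sets (paths E) (\<Union>n\<in>{1..}. sets (natF.pre_sigma E (S n)))"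
    and S_eq_T'_n: "\<And>\<omega> n. \<omega> \<in> H \<Longrightarrow> 1 \<le> n \<Longrightarrow> S n \<omega> = T'_n n \<omega>"
begin

interpretation \<Sigma>: sigma_algebra "paths E" "sigma_sets (paths E) (\<Union>n\<in>{1..}. sets (natF.pre_sigma E (S n)))"
  by (rule natF.sigma_algebra_sigma_pre_sigma)

lemma coordinate_event_Int_in_sigma_stopped:
  assumes s: "0 \<le> s" and B: "B \<in> sets (borelD E)"
  shows "{\<omega>\<in>paths E. \<omega> s \<in> B} \<inter> H \<in> sigma_sets (paths E) (\<Union>n\<in>{1..}. sets (natF.pre_sigma E (S n)))"
    (is "?G \<inter> H \<in> ?\<Sigma>")
proof -
  have H_paths: "H \<subseteq> paths E" using H by (rule \<Sigma>.sets_into_space)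
  have before: "(\<Union>n\<in>{1..}. {\<omega>\<in>X. ereal s < S n \<omega>}) \<in> ?\<Sigma>" if "X \<in> sets (natF E (ereal s))" for X
    using natF.sets_pre_sigma_Int_less_const[OF S that]
    by (intro \<Sigma>.countable_UN''[OF countableI_type] sigma_sets.Basic) blast
  have events: "?G \<in> sets (natF E (ereal s))" "paths E \<in> sets (natF E (ereal s))"
    using pred_natF_mem[OF s order_refl B] sets.top[of "natF E (ereal s)"] by (auto simp: pred_def)
  have pieces: "(\<Union>n\<in>{1..}. {\<omega>\<in>?G. ereal s < S n \<omega>}) \<in> ?\<Sigma>"
    "(if None \<in> B then paths E - (\<Union>n\<in>{1..}. {\<omega>\<in>paths E. ereal s < S n \<omega>}) else {}) \<in> ?\<Sigma>"
    using before[OF events(1)] \<Sigma>.Diff[OF \<Sigma>.top before[OF events(2)]] \<Sigma>.empty_sets by simp_all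
  have "\<omega> s \<in> B \<longleftrightarrow> (\<exists>n\<in>{1..}. \<omega> s \<in> B \<and> ereal s < S n \<omega>) \<or>
      (None \<in> B \<and> (\<forall>n\<in>{1..}. \<not> ereal s < S n \<omega>))" if "\<omega> \<in> H" for \<omega>
  proof -
    have "\<omega> s = None \<longleftrightarrow> (\<forall>n\<in>{1..}. \<not> ereal s < S n \<omega>)"
      using paths_None_iff_T'_n_le[of \<omega> E s] H_paths that s S_eq_T'_n[OF that] by auto
    then show ?thesis by (cases "\<omega> s = None") auto
  qed
  then have "?G \<inter> H = H \<inter> ((\<Union>n\<in>{1..}. {\<omega>\<in>?G. ereal s < S n \<omega>}) \<union>
      (if None \<in> B then paths E - (\<Union>n\<in>{1..}. {\<omega>\<in>paths E. ereal s < S n \<omega>}) else {}))"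
    using H_paths by auto
  also have "\<dots> \<in> ?\<Sigma>"
    using H pieces by (intro \<Sigma>.Int \<Sigma>.Un)
  finally show ?thesis .
qed

lemma sets_natF_Int_in_sigma_stopped:
  assumes "A \<in> sets (natF E \<infinity>)"
  shows "A \<inter> H \<in> sigma_sets (paths E) (\<Union>n\<in>{1..}. sets (natF.pre_sigma E (S n)))"
proof (rule sigma_sets_Int_mem[OF \<Sigma>.sigma_algebra_axioms H])
  show "A \<in> sigma_sets (paths E)
      {{\<omega> \<in> paths E. \<omega> s \<in> B} | s B. 0 \<le> s \<and> ereal s \<le> \<infinity> \<and> B \<in> sets (borelD E)}"
    using assms by (simp only: sets_natF)
qed (blast intro: coordinate_event_Int_in_sigma_stopped)

end

lemma sets_pre_sigma_subset_sigma_T_n: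
  fixes E :: "'a::euclidean_space set" and T :: "(real \<Rightarrow> 'a option) \<Rightarrow> ereal"
  defines "\<Sigma> \<equiv> sigma_sets (paths E)
    (\<Union>n\<in>{1..}. sets (natF.pre_sigma E (\<lambda>\<omega>. min (T \<omega>) (T_n n \<omega>))))"
  assumes T: "stopping_time (natF E) T"
  shows "sets (natF.pre_sigma E T) \<subseteq> \<Sigma>"
proof
  let ?S = "\<lambda>n \<omega>. min (T \<omega>) (T_n n \<omega>)"
  have S: "stopping_time (natF E) (?S n)" for n
    by (intro stopping_time_min T stopping_time_T_n)
  interpret \<Sigma>: sigma_algebra "paths E" \<Sigma>
    unfolding \<Sigma>_def by (rule natF.sigma_algebra_sigma_pre_sigma)
  have F_infinity: "A \<in> sets (natF E \<infinity>)" if "A \<in> sets (natF.pre_sigma E T)" for A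
    using natF.sets_pre_sigmaD[OF T that, of \<infinity>] by simp
  have generator: "X \<in> \<Sigma>" if "X \<in> sets (natF.pre_sigma E (?S n))" "n \<in> {1..}" for X n
    unfolding \<Sigma>_def using that by (intro sigma_sets.Basic) blast
  have early: "(\<Union>n\<in>{1..}. {\<omega>\<in>A. T \<omega> < T_n n \<omega>}) \<in> \<Sigma>" if "A \<in> sets (natF.pre_sigma E T)" for A
    using natF.sets_pre_sigma_min_less[OF T stopping_time_T_n that]
    by (intro \<Sigma>.countable_UN''[OF countableI_type] generator)
  have late: "(\<Union>n\<in>{1..}. {\<omega>\<in>A. ?S n \<omega> = \<infinity>}) \<in> \<Sigma>" if "A \<in> sets (natF.pre_sigma E T)" for A
    using natF.sets_pre_sigma_Int_eq_const[OF S F_infinity[OF that]]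
    by (intro \<Sigma>.countable_UN''[OF countableI_type] generator)
  define H where "H = paths E - (\<Union>n\<in>{1..}. {\<omega>\<in>paths E. T \<omega> < T_n n \<omega>})
    - (\<Union>n\<in>{1..}. {\<omega>\<in>paths E. ?S n \<omega> = \<infinity>})"
  have "paths E \<in> sets (natF.pre_sigma E T)"
    using sets.top[of "natF.pre_sigma E T"] by (simp add: natF.space_pre_sigma)
  then have H: "H \<in> \<Sigma>"
    unfolding H_def using early late by (intro \<Sigma>.Diff \<Sigma>.top)
  have H_T'_n: "?S n \<omega> = T'_n n \<omega>" if "\<omega> \<in> H" "1 \<le> n" for \<omega> n
  proof -
    have "\<not> T \<omega> < T_n n \<omega>" "?S n \<omega> \<noteq> \<infinity>" using that by (auto simp: H_def)
    then have "?S n \<omega> = T_n n \<omega>" "T_n n \<omega> \<noteq> \<infinity>" by (auto simp: min_def)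
    then show ?thesis by (simp add: T_n_def split: if_splits)
  qed
  fix A assume A: "A \<in> sets (natF.pre_sigma E T)"
  have "A = (\<Union>n\<in>{1..}. {\<omega>\<in>A. T \<omega> < T_n n \<omega>}) \<union> (\<Union>n\<in>{1..}. {\<omega>\<in>A. ?S n \<omega> = \<infinity>}) \<union> A \<inter> H"
    using sets.sets_into_space[OF A] by (auto simp: H_def natF.space_pre_sigma)
  also have "\<dots> \<in> \<Sigma>"
  proof (intro \<Sigma>.Un early[OF A] late[OF A])
    show "A \<inter> H \<in> \<Sigma>"
      using sets_natF_Int_in_sigma_stopped[OF S H[unfolded \<Sigma>_def] H_T'_n F_infinity[OF A]]
      unfolding \<Sigma>_def .
  qed
  finally show "A \<in> \<Sigma>" .
qed

lemma sigma_T_n_subset_pre_sigma_T_expl: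
  fixes E :: "'a::euclidean_space set" and T :: "(real \<Rightarrow> 'a option) \<Rightarrow> ereal"
  assumes T: "stopping_time (natF E) T"
  shows "sigma_sets (paths E) (\<Union>n\<in>{1..}. sets (natF.pre_sigma E (\<lambda>\<omega>. min (T \<omega>) (T_n n \<omega>))))
    \<subseteq> sets (natF.pre_sigma E (\<lambda>\<omega>. min (T \<omega>) (T_expl \<omega>)))"
proof -
  let ?S = "\<lambda>n \<omega>. min (T \<omega>) (T_n n \<omega>)" and ?R = "\<lambda>\<omega>. min (T \<omega>) (T_expl \<omega>)"
  have "sets (natF.pre_sigma E (?S n)) \<subseteq> sets (natF.pre_sigma E ?R)" if "n \<in> {1..}" for n
  proof (rule natF.mono_pre_sigma)
    show "stopping_time (natF E) (?S n)" "stopping_time (natF E) ?R"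
      by (intro stopping_time_min T stopping_time_T_n stopping_time_T_expl)+
    show "?S n \<omega> \<le> ?R \<omega>" if "\<omega> \<in> paths E" for \<omega>
    proof -
      have "T_n n \<omega> \<le> T_expl \<omega>"
        unfolding T_expl_eq_SUP_T_n[OF that] using \<open>n \<in> {1..}\<close> by (rule SUP_upper)
      then show ?thesis by (rule min.mono[OF order_refl])
    qed
  qed
  then have "sigma_sets (space (natF.pre_sigma E ?R)) (\<Union>n\<in>{1..}. sets (natF.pre_sigma E (?S n)))
      \<subseteq> sets (natF.pre_sigma E ?R)"
    by (intro sets.sigma_sets_subset) blast
  then show ?thesis
    unfolding natF.space_pre_sigma .
qed

theorem proposition2p1:
  fixes E :: "'a::euclidean_space set"
    and T :: "(real \<Rightarrow> 'a option) \<Rightarrow> ereal"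
  assumes "closed E"
    and "stopping_time (natF E) T"
    and "\<forall>\<omega>\<in>paths E. 0 \<le> T \<omega>"
  shows "sets (filtration.pre_sigma (paths E) (natF E) T)
           = sets (filtration.pre_sigma (paths E) (natF E) (\<lambda>\<omega>. min (T \<omega>) (T_expl \<omega>)))
         \<and> sets (filtration.pre_sigma (paths E) (natF E) T)
           = sigma_sets (paths E)
               (\<Union>n\<in>{1..}. sets (filtration.pre_sigma (paths E) (natF E) (\<lambda>\<omega>. min (T \<omega>) (T_n n \<omega>))))"
proof -
  note T = assms(2)
  have R: "stopping_time (natF E) (\<lambda>\<omega>. min (T \<omega>) (T_expl \<omega>))"
    by (intro stopping_time_min T stopping_time_T_expl)
  have "sets (natF.pre_sigma E (\<lambda>\<omega>. min (T \<omega>) (T_expl \<omega>))) \<subseteq> sets (natF.pre_sigma E T)"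
    by (rule natF.mono_pre_sigma[OF R T]) simp
  with sigma_T_n_subset_pre_sigma_T_expl[OF T] sets_pre_sigma_subset_sigma_T_n[OF T]
  show ?thesis by blast
qed

end
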